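(* Let $p=(p_1,\dots,p_d)$ and $q=(q_1,\dots,q_d)$ be probability vectors with all $q_i>0$ and $p_i\ge\tau$ for all $i$, where $0<\tau\le1/3$. Then $$\sum_{i=1}^d(\log p_i-\log q_i)^2\le\frac{12\log(\tau)^2}{\tau}\,\mathrm{KL}(p\|q)+\frac{9}{\tau^2}\,\mathrm{KL}(p\|q)^2,$$ where $\mathrm{KL}(p\|q)=\sum_i p_i\log(p_i/q_i)$. *)

theory Defs
  imports Complex_Main
begin

definition prob_vec :: "nat \<Rightarrow> (nat \<Rightarrow> real) \<Rightarrow> bool" where
  "prob_vec d p \<longleftrightarrow> (\<forall>i\<in>{1..d}. p i \<ge> 0) \<and> (\<Sum>i=1..d. p i) = 1"

definition KL :: "nat \<Rightarrow> (nat \<Rightarrow> real) \<Rightarrow> (nat \<Rightarrow> real) \<Rightarrow> real" where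
  "KL d p q = (\<Sum>i=1..d. p i * ln (p i / q i))"

end

theory Submission
  imports Defs
begin

text \<open>Write \<open>r\<^sub>i = q\<^sub>i / p\<^sub>i\<close> and \<open>g\<^sub>i = r\<^sub>i - 1 - ln r\<^sub>i \<ge> 0\<close>. Since both vectors sum to one,
  \<open>KL(p\<parallel>q) = \<Sum>\<^sub>i p\<^sub>i g\<^sub>i\<close>, so \<open>p\<^sub>i \<ge> \<tau>\<close> gives \<open>\<Sum>\<^sub>i g\<^sub>i \<le> KL/\<tau>\<close> and \<open>\<Sum>\<^sub>i g\<^sub>i\<^sup>2 \<le> KL\<^sup>2/\<tau>\<^sup>2\<close>.
  The summands on the left are \<open>(ln r\<^sub>i)\<^sup>2\<close>, and the scalar inequality \<open>(ln r)\<^sup>2 \<le> 6 g + 4 g\<^sup>2\<close>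
  finishes the proof, because \<open>\<tau> \<le> 1/3 < 1/e\<close> makes \<open>(ln \<tau>)\<^sup>2 \<ge> 1\<close>.\<close>

lemma exp_ge_cubic_Taylor: "1 + t + t^2/2 + t^3/6 \<le> exp (t::real)"
proof -
  obtain u where "exp t = (\<Sum>m<4. t ^ m / fact m) + exp u / fact 4 * t ^ 4"
    using Maclaurin_exp_le[of t 4] by blast
  moreover have "(\<Sum>m<4. t ^ m / fact m) = 1 + t + t^2/2 + t^3/6"
    by (simp add: eval_nat_numeral fact_numeral)
  moreover have "0 \<le> exp u / fact 4 * t ^ 4" by simp
  ultimately show ?thesis by linarith
qed

text \<open>For \<open>t \<ge> -2\<close> the cubic Taylor bound gives \<open>t\<^sup>2 \<le> 6 g\<close>; for \<open>t < -2\<close> already \<open>g \<ge> -t/2\<close>,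
  so \<open>t\<^sup>2 \<le> 4 g\<^sup>2\<close>.\<close>

lemma square_le_exp_gap: "(t::real)^2 \<le> 6 * (exp t - 1 - t) + 4 * (exp t - 1 - t)^2"
proof (cases "t \<ge> -2")
  case True
  then have "t^2 * (t + 2) \<ge> 0" by simp
  then have "t^3/6 \<ge> -(t^2/3)" by (simp add: power3_eq_cube power2_eq_square algebra_simps)
  then have "t^2/6 \<le> exp t - 1 - t" using exp_ge_cubic_Taylor[of t] by linarith
  then have "t^2 \<le> 6 * (exp t - 1 - t)" by simp
  then show ?thesis by (simp add: add_increasing2)
next
  case False
  then have gap: "-t/2 \<le> exp t - 1 - t" and "0 \<le> -t/2"
    using exp_gt_zero[of t] by linarith+
  then have "(-t/2)^2 \<le> (exp t - 1 - t)^2" by (rule power_mono)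
  moreover have "0 \<le> exp t - 1 - t" using exp_ge_add_one_self[of t] by linarith
  ultimately show ?thesis by (simp add: power2_eq_square)
qed

lemma ln_squared_le_gap:
  fixes x :: real
  assumes "0 < x"
  shows "(ln x)^2 \<le> 6 * (x - 1 - ln x) + 4 * (x - 1 - ln x)^2"
  using square_le_exp_gap[of "ln x"] assms by simp

lemma KL_eq_sum_gap:
  assumes "(\<Sum>i=1..d. p i) = (\<Sum>i=1..d. q i)"
    and "\<And>i. i \<in> {1..d} \<Longrightarrow> 0 < p i" and "\<And>i. i \<in> {1..d} \<Longrightarrow> 0 < q i"
  shows "KL d p q = (\<Sum>i=1..d. p i * (q i / p i - 1 - ln (q i / p i)))"
proof -
  have "(\<Sum>i=1..d. p i * (q i / p i - 1 - ln (q i / p i)))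
        = (\<Sum>i=1..d. q i - p i + p i * ln (p i / q i))"
  proof (rule sum.cong)
    fix i assume "i \<in> {1..d}"
    with assms(2,3) have "0 < p i" "0 < q i" by auto
    then show "p i * (q i / p i - 1 - ln (q i / p i)) = q i - p i + p i * ln (p i / q i)"
      by (simp add: ln_div field_simps)
  qed simp
  also have "\<dots> = KL d p q"
    using assms(1) by (simp add: sum.distrib sum_subtractf KL_def)
  finally show ?thesis by simp
qed

lemma sum_le_weighted_sum:
  fixes a w :: "'i \<Rightarrow> real"
  assumes "\<And>i. i \<in> A \<Longrightarrow> 0 \<le> a i" and "\<And>i. i \<in> A \<Longrightarrow> \<tau> \<le> w i"
  shows "\<tau> * sum a A \<le> (\<Sum>i\<in>A. w i * a i)"
  unfolding sum_distrib_left using assms by (intro sum_mono mult_right_mono) auto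

text \<open>Each \<open>\<tau> a\<^sub>i\<close> is bounded by the whole weighted sum \<open>S\<close>, so \<open>\<tau> \<Sum> a\<^sub>i\<^sup>2 \<le> S \<Sum> a\<^sub>i \<le> S\<^sup>2 / \<tau>\<close>.\<close>

lemma sum_squares_le_weighted_sum_squared:
  fixes a w :: "'i \<Rightarrow> real"
  assumes "finite A" and "0 \<le> \<tau>"
    and nonneg: "\<And>i. i \<in> A \<Longrightarrow> 0 \<le> a i" and weight: "\<And>i. i \<in> A \<Longrightarrow> \<tau> \<le> w i"
  shows "\<tau>^2 * (\<Sum>i\<in>A. (a i)^2) \<le> (\<Sum>i\<in>A. w i * a i)^2"
proof -
  define S where "S = (\<Sum>i\<in>A. w i * a i)"
  have wa_nonneg: "0 \<le> w i * a i" if "i \<in> A" for i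
    using that nonneg weight assms(2) by (meson order_trans mult_nonneg_nonneg)
  have "\<tau> * (a i)^2 \<le> S * a i" if i: "i \<in> A" for i
  proof -
    have "\<tau> * a i \<le> w i * a i" using i nonneg weight by (simp add: mult_right_mono)
    also have "\<dots> \<le> S"
      unfolding S_def by (rule member_le_sum) (use i wa_nonneg assms(1) in auto)
    finally show ?thesis using nonneg[OF i] mult_right_mono by (fastforce simp: power2_eq_square)
  qed
  then have "\<tau> * (\<Sum>i\<in>A. (a i)^2) \<le> S * sum a A"
    by (simp add: sum_distrib_left sum_mono)
  then have "\<tau> * (\<tau> * (\<Sum>i\<in>A. (a i)^2)) \<le> \<tau> * (S * sum a A)"
    using assms(2) by (rule mult_left_mono)
  then have "\<tau>^2 * (\<Sum>i\<in>A. (a i)^2) \<le> S * (\<tau> * sum a A)"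
    by (simp add: power2_eq_square mult_ac)
  also have "\<dots> \<le> S * S"
  proof (rule mult_left_mono)
    show "\<tau> * sum a A \<le> S" unfolding S_def using nonneg weight by (rule sum_le_weighted_sum)
    show "0 \<le> S" unfolding S_def using wa_nonneg by (rule sum_nonneg)
  qed
  finally show ?thesis by (simp add: S_def power2_eq_square)
qed

lemma KL_nonneg:
  assumes "(\<Sum>i=1..d. p i) = (\<Sum>i=1..d. q i)"
    and "\<And>i. i \<in> {1..d} \<Longrightarrow> 0 < p i" and "\<And>i. i \<in> {1..d} \<Longrightarrow> 0 < q i"
  shows "0 \<le> KL d p q"
proof -
  have "0 \<le> (\<Sum>i=1..d. p i * (q i / p i - 1 - ln (q i / p i)))"
  proof (rule sum_nonneg)
    fix i assume "i \<in> {1..d}"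
    with assms(2,3) have "0 < p i" "0 < q i" by auto
    then show "0 \<le> p i * (q i / p i - 1 - ln (q i / p i))"
      using ln_le_minus_one[of "q i / p i"] by simp
  qed
  also have "\<dots> = KL d p q"
    using assms by (rule KL_eq_sum_gap[symmetric])
  finally show ?thesis .
qed

lemma sum_ln_diff_squared_le_KL:
  assumes "(\<Sum>i=1..d. p i) = (\<Sum>i=1..d. q i)"
    and p_pos: "\<And>i. i \<in> {1..d} \<Longrightarrow> 0 < p i" and q_pos: "\<And>i. i \<in> {1..d} \<Longrightarrow> 0 < q i"
    and p_ge: "\<And>i. i \<in> {1..d} \<Longrightarrow> \<tau> \<le> p i" and "0 < \<tau>"
  shows "(\<Sum>i=1..d. (ln (p i) - ln (q i))^2) \<le> 6 / \<tau> * KL d p q + 4 / \<tau>^2 * (KL d p q)^2"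
proof -
  define g where "g i = q i / p i - 1 - ln (q i / p i)" for i
  define K where "K = KL d p q"
  have g_nonneg: "0 \<le> g i" if "i \<in> {1..d}" for i
    using ln_le_minus_one[of "q i / p i"] p_pos[OF that] q_pos[OF that] by (simp add: g_def)
  have K_eq: "K = (\<Sum>i=1..d. p i * g i)"
    unfolding K_def g_def using assms(1-3) by (rule KL_eq_sum_gap)
  have "\<tau> * (\<Sum>i=1..d. g i) \<le> K"
    unfolding K_eq using g_nonneg p_ge by (rule sum_le_weighted_sum)
  then have sum_g: "(\<Sum>i=1..d. g i) \<le> K / \<tau>"
    using \<open>0 < \<tau>\<close> by (simp add: pos_le_divide_eq mult.commute)
  have "\<tau>^2 * (\<Sum>i=1..d. (g i)^2) \<le> K^2"
    unfolding K_eq using _ _ g_nonneg p_ge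
    by (rule sum_squares_le_weighted_sum_squared) (use \<open>0 < \<tau>\<close> in auto)
  then have sum_g2: "(\<Sum>i=1..d. (g i)^2) \<le> K^2 / \<tau>^2"
    using \<open>0 < \<tau>\<close> by (simp add: pos_le_divide_eq mult.commute)
  have "(\<Sum>i=1..d. (ln (p i) - ln (q i))^2) \<le> (\<Sum>i=1..d. 6 * g i + 4 * (g i)^2)"
  proof (rule sum_mono)
    fix i assume "i \<in> {1..d}"
    then have "0 < p i" "0 < q i" using p_pos q_pos by auto
    then have "(ln (p i) - ln (q i))^2 = (ln (q i / p i))^2"
      by (simp add: ln_div power2_commute)
    also have "\<dots> \<le> 6 * g i + 4 * (g i)^2"
      unfolding g_def using \<open>0 < p i\<close> \<open>0 < q i\<close> by (intro ln_squared_le_gap) simp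
    finally show "(ln (p i) - ln (q i))^2 \<le> 6 * g i + 4 * (g i)^2" .
  qed
  also have "\<dots> = 6 * (\<Sum>i=1..d. g i) + 4 * (\<Sum>i=1..d. (g i)^2)"
    by (simp add: sum.distrib sum_distrib_left)
  also have "\<dots> \<le> 6 * (K / \<tau>) + 4 * (K^2 / \<tau>^2)"
    using sum_g sum_g2 by linarith
  finally show ?thesis by (simp add: K_def)
qed

lemma one_le_ln_squared:
  fixes \<tau> :: real
  assumes "0 < \<tau>" and "\<tau> \<le> exp (-1)"
  shows "1 \<le> (ln \<tau>)^2"
proof -
  have "ln \<tau> \<le> ln (exp (-1))" using assms by (subst ln_le_cancel_iff) auto
  then have "1 \<le> (- ln \<tau>)^2" by (intro one_le_power) simp
  then show ?thesis by simp
qed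

lemma third_le_exp_minus_one: "1/3 \<le> exp (-1::real)"
  using exp_le by (simp add: exp_minus field_simps)

theorem mainTheorem17:
  fixes d :: nat and p q :: "nat \<Rightarrow> real" and \<tau> :: real
  assumes "prob_vec d p" and "prob_vec d q"
    and "\<forall>i\<in>{1..d}. q i > 0"
    and "\<forall>i\<in>{1..d}. p i \<ge> \<tau>"
    and "0 < \<tau>" and "\<tau> \<le> 1/3"
  shows "(\<Sum>i=1..d. (ln (p i) - ln (q i))^2)
           \<le> 12 * (ln \<tau>)^2 / \<tau> * KL d p q + 9 / \<tau>^2 * (KL d p q)^2"
proof -
  have sums_eq: "(\<Sum>i=1..d. p i) = (\<Sum>i=1..d. q i)"
    using assms(1,2) by (simp add: prob_vec_def)
  have p_pos: "\<And>i. i \<in> {1..d} \<Longrightarrow> 0 < p i" and q_pos: "\<And>i. i \<in> {1..d} \<Longrightarrow> 0 < q i"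
    and p_ge: "\<And>i. i \<in> {1..d} \<Longrightarrow> \<tau> \<le> p i"
    using assms(3-5) by force+
  have "1 \<le> (ln \<tau>)^2"
    using assms(5) by (rule one_le_ln_squared) (use assms(6) third_le_exp_minus_one in linarith)
  then have "6 / \<tau> \<le> 12 * (ln \<tau>)^2 / \<tau>" and "4 / \<tau>^2 \<le> 9 / \<tau>^2"
    using assms(5) by (simp_all add: divide_right_mono)
  moreover have "0 \<le> KL d p q" using sums_eq p_pos q_pos by (rule KL_nonneg)
  moreover have "(\<Sum>i=1..d. (ln (p i) - ln (q i))^2) \<le> 6 / \<tau> * KL d p q + 4 / \<tau>^2 * (KL d p q)^2"
    using sums_eq p_pos q_pos p_ge assms(5) by (rule sum_ln_diff_squared_le_KL)
  ultimately show ?thesis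
    by (smt (verit) mult_right_mono zero_le_power2)
qed

end
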